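(* Let $k \in \mathbb{N}$. Every linear $k$-DCFG $G$ is equivalent to (i.e. generates the same language as) some $k$-DCFG $G'=\langle N, \Sigma, P, S\rangle$ all of whose rules have one of the following forms, where $A, B \in N$ and $u \in \Theta$: (1) $A \to u\cdot B$ or $A \to B \cdot u$, with $|u| \leq 1$ and $u \neq \epsilon$; (2) $A \to B \odot_j u$, with $|u| \leq 1$; (3) $A \to u$, with $|u| = 1$; (4) $S \to \epsilon$ (where $S$ is the start symbol).
   Context: Fix a finite alphabet $\Sigma$; $\Sigma^*$ is the set of words over $\Sigma$ and $\epsilon$ the empty word. $\Theta_k$ is the set of tuples $(u_0,\ldots,u_k)$ with $u_i\in\Sigma^*$, and $\Theta=\bigcup_{k\in\mathbb{N}}\Theta_k$; the rank of $(u_0,\ldots,u_k)$ is $k$, and its length $|u|$ is the sum of the lengths of its components. Rank-$0$ tuples are identified with words; in particular $\epsilon$ also denotes the rank-$0$ tuple $(\epsilon)$. Concatenation $\cdot:\Theta_i\times\Theta_j\to\Theta_{i+j}$ is $(x_0,\ldots,x_i)\cdot(y_0,\ldots,y_j)=(x_0,\ldots,x_{i-1},x_iy_0,y_1,\ldots,y_j)$, and for $1\le l\le i$ intercalation $\odot_l:\Theta_i\times\Theta_j\to\Theta_{i+j-1}$ is $(x_0,\ldots,x_i)\odot_l(y_0,\ldots,y_j)=(x_0,\ldots,x_{l-2},x_{l-1}y_0,y_1,\ldots,y_{j-1},y_jx_l,x_{l+1},\ldots,x_i)$. Let $N$ be a finite set of nonterminals disjoint from $\Sigma$ with a rank function $\mathrm{rk}:N\to\mathbb{N}$.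 The set of $k$-correct terms $\mathrm{Tm}_k(N,\Sigma)$ and their ranks are defined inductively: every tuple in $\Theta_j$ with $j\le k$ is a term of rank $j$, and every nonterminal $A$ with $\mathrm{rk}(A)\le k$ is a term of rank $\mathrm{rk}(A)$; if $\alpha,\beta$ are terms with $\mathrm{rk}\,\alpha+\mathrm{rk}\,\beta\le k$ then $(\alpha\cdot\beta)$ is a term of rank $\mathrm{rk}\,\alpha+\mathrm{rk}\,\beta$; if $1\le j\le k$, $\mathrm{rk}\,\alpha\ge j$ and $\mathrm{rk}\,\alpha+\mathrm{rk}\,\beta\le k+1$ then $(\alpha\odot_j\beta)$ is a term of rank $\mathrm{rk}\,\alpha+\mathrm{rk}\,\beta-1$. A ground term is one containing no nonterminals; its value $\nu(\alpha)\in\Theta$ is obtained by interpreting $\cdot$ and $\odot_j$ as the operations above. A context $C[x]$ is a term with one leaf occurrence of a variable $x$ of some rank; $C[\beta]$ is the result of substituting a term $\beta$ of the same rank for $x$. A $k$-displacement context-free grammar ($k$-DCFG) is $G=\langle N,\Sigma,P,S\rangle$ where $S\in N$ has rank $0$ and $P$ is a finite set of rules $A\to\alpha$ with $A\in N$, $\alpha\in\mathrm{Tm}_k(N,\Sigma)$ and $\mathrm{rk}(A)=\mathrm{rk}(\alpha)$. Standing assumption: all tuples occurring as leaves of right-hand sides of rules have length at most $1$. Derivability $\vdash_G$ is the smallest reflexive transitive relation between nonterminals and terms such that $(B\to\beta)\in P$ and $A\vdash_G C[B]$ imply $A\vdash_G C[\beta]$ for any context $C$. $L_G(A)=\{\nu(\alpha)\mid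 A\vdash_G\alpha,\ \alpha \text{ ground}\}$ and $L(G)=L_G(S)$. Two grammars are equivalent if they generate the same language. A term is linear if it contains at most one occurrence of a nonterminal; a grammar is linear if the right-hand sides of all its rules are linear. All right-hand sides in the claim are required to be $k$-correct terms of the same rank as the left-hand side. *)

theory Defs
  imports Main
begin

text \<open>A tuple (u_0,...,u_k) in Theta_k is a nonempty list of words of length k+1.\<close>

type_synonym 'a tuple = "'a list list"

definition tup_rank :: "'a tuple \<Rightarrow> nat" where
  "tup_rank u = length u - 1"

definition tup_len :: "'a tuple \<Rightarrow> nat" where
  "tup_len u = sum_list (map length u)"

definition eps_tup :: "'a tuple" where
  "eps_tup = [[]]"

definition tup_cat :: "'a tuple \<Rightarrow> 'a tuple \<Rightarrow> 'a tuple" where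
  "tup_cat xs ys = butlast xs @ [last xs @ hd ys] @ tl ys"

text \<open>Intercalation for 1 <= l <= i:
  (x_0..x_i) odot_l (y_0..y_j) = (x_0..x_{l-2}, x_{l-1} y_0, y_1..y_{j-1}, y_j x_l, x_{l+1}..x_i).\<close>
definition tup_intc :: "nat \<Rightarrow> 'a tuple \<Rightarrow> 'a tuple \<Rightarrow> 'a tuple" where
  "tup_intc l xs ys = tup_cat (tup_cat (take l xs) ys) (drop l xs)"

datatype ('a, 'n) tm =
    Tup "'a tuple"
  | NT 'n
  | Cat "('a, 'n) tm" "('a, 'n) tm"
  | Intc nat "('a, 'n) tm" "('a, 'n) tm"

fun tm_rank :: "('n \<Rightarrow> nat) \<Rightarrow> ('a, 'n) tm \<Rightarrow> nat" where
  "tm_rank rk (Tup u) = tup_rank u"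
| "tm_rank rk (NT A) = rk A"
| "tm_rank rk (Cat a b) = tm_rank rk a + tm_rank rk b"
| "tm_rank rk (Intc j a b) = tm_rank rk a + tm_rank rk b - 1"

fun kcorrect :: "nat \<Rightarrow> ('n \<Rightarrow> nat) \<Rightarrow> ('a, 'n) tm \<Rightarrow> bool" where
  "kcorrect k rk (Tup u) = (u \<noteq> [] \<and> tup_rank u \<le> k)"
| "kcorrect k rk (NT A) = (rk A \<le> k)"
| "kcorrect k rk (Cat a b) =
     (kcorrect k rk a \<and> kcorrect k rk b \<and> tm_rank rk a + tm_rank rk b \<le> k)"
| "kcorrect k rk (Intc j a b) =
     (kcorrect k rk a \<and> kcorrect k rk b \<and> 1 \<le> j \<and> j \<le> k \<and>
      j \<le> tm_rank rk a \<and> tm_rank rk a + tm_rank rk b \<le> k + 1)"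

fun nts :: "('a, 'n) tm \<Rightarrow> 'n list" where
  "nts (Tup u) = []"
| "nts (NT A) = [A]"
| "nts (Cat a b) = nts a @ nts b"
| "nts (Intc j a b) = nts a @ nts b"

definition ground :: "('a, 'n) tm \<Rightarrow> bool" where
  "ground t \<longleftrightarrow> nts t = []"

fun leaf_tuples :: "('a, 'n) tm \<Rightarrow> 'a tuple list" where
  "leaf_tuples (Tup u) = [u]"
| "leaf_tuples (NT A) = []"
| "leaf_tuples (Cat a b) = leaf_tuples a @ leaf_tuples b"
| "leaf_tuples (Intc j a b) = leaf_tuples a @ leaf_tuples b"

fun val :: "('a, 'n) tm \<Rightarrow> 'a tuple" where
  "val (Tup u) = u"
| "val (NT A) = undefined"
| "val (Cat a b) = tup_cat (val a) (val b)"
| "val (Intc j a b) = tup_intc j (val a) (val b)"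

record ('a, 'n) dcfg =
  NTs :: "'n set"
  rk :: "'n \<Rightarrow> nat"
  Rules :: "('n \<times> ('a, 'n) tm) set"
  Start :: 'n

definition is_kDCFG :: "nat \<Rightarrow> ('a, 'n) dcfg \<Rightarrow> bool" where
  "is_kDCFG k G \<longleftrightarrow>
     finite (NTs G) \<and> Start G \<in> NTs G \<and> rk G (Start G) = 0 \<and>
     finite (Rules G) \<and>
     (\<forall>(A, \<alpha>) \<in> Rules G.
        A \<in> NTs G \<and> set (nts \<alpha>) \<subseteq> NTs G \<and>
        kcorrect k (rk G) \<alpha> \<and> tm_rank (rk G) \<alpha> = rk G A \<and>
        (\<forall>u \<in> set (leaf_tuples \<alpha>). tup_len u \<le> 1))"

inductive rstep :: "('n \<times> ('a, 'n) tm) set \<Rightarrow> ('a, 'n) tm \<Rightarrow> ('a, 'n) tm \<Rightarrow> bool"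
  for P where
  rule: "(B, \<beta>) \<in> P \<Longrightarrow> rstep P (NT B) \<beta>"
| catL: "rstep P a a' \<Longrightarrow> rstep P (Cat a b) (Cat a' b)"
| catR: "rstep P b b' \<Longrightarrow> rstep P (Cat a b) (Cat a b')"
| intcL: "rstep P a a' \<Longrightarrow> rstep P (Intc j a b) (Intc j a' b)"
| intcR: "rstep P b b' \<Longrightarrow> rstep P (Intc j a b) (Intc j a b')"

definition derives :: "('a, 'n) dcfg \<Rightarrow> 'n \<Rightarrow> ('a, 'n) tm \<Rightarrow> bool" where
  "derives G A \<alpha> \<longleftrightarrow> (rstep (Rules G))\<^sup>*\<^sup>* (NT A) \<alpha>"

definition LangNT :: "('a, 'n) dcfg \<Rightarrow> 'n \<Rightarrow> 'a tuple set" where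
  "LangNT G A = {val \<alpha> | \<alpha>. derives G A \<alpha> \<and> ground \<alpha>}"

definition Lang :: "('a, 'n) dcfg \<Rightarrow> 'a tuple set" where
  "Lang G = LangNT G (Start G)"

definition linear_tm :: "('a, 'n) tm \<Rightarrow> bool" where
  "linear_tm t \<longleftrightarrow> length (nts t) \<le> 1"

definition linear_dcfg :: "('a, 'n) dcfg \<Rightarrow> bool" where
  "linear_dcfg G \<longleftrightarrow> (\<forall>(A, \<alpha>) \<in> Rules G. linear_tm \<alpha>)"

definition nf_rule :: "('a, 'n) dcfg \<Rightarrow> 'n \<times> ('a, 'n) tm \<Rightarrow> bool" where
  "nf_rule G r \<longleftrightarrow>
     (\<exists>A B u. r = (A, Cat (Tup u) (NT B)) \<and> tup_len u \<le> 1 \<and> u \<noteq> eps_tup) \<or>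
     (\<exists>A B u. r = (A, Cat (NT B) (Tup u)) \<and> tup_len u \<le> 1 \<and> u \<noteq> eps_tup) \<or>
     (\<exists>A B j u. r = (A, Intc j (NT B) (Tup u)) \<and> tup_len u \<le> 1) \<or>
     (\<exists>A u. r = (A, Tup u) \<and> tup_len u = 1) \<or>
     r = (Start G, Tup eps_tup)"

end

theory Submission
  imports Defs
begin

text \<open>A linear rule A \<rightarrow> \<alpha>[B] computes its values from those of B by a fixed sequence of
  elementary operations: concatenating a tuple of length at most 1 on the left or on the right, or
  intercalating one. The normal-form grammar has a nonterminal for every prefix of such a
  sequence, so that each operation becomes a single rule of form (1) or (2); sequences are followed
  through chains of unit rules, whose sequences are empty. Tuples of length 0 are the delicate
  part, since rules of form (3) produce a letter. A rule whose nonterminal contributes only the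
  tuple of empty words (or which is ground) contributes a constant; if that constant has positive
  length, it is built from one of its letters by elementary operations, and otherwise it does not
  influence the positive-length part of any language. Finally, the only tuple of rank 0 and
  length 0 is \<epsilon>, which the new start symbol produces directly.\<close>

section \<open>Least-fixpoint semantics\<close>

inductive yields :: "('n \<times> ('a, 'n) tm) set \<Rightarrow> ('a, 'n) tm \<Rightarrow> 'a tuple \<Rightarrow> bool" for R where
  yields_Tup: "yields R (Tup u) u"
| yields_NT: "(A, \<beta>) \<in> R \<Longrightarrow> yields R \<beta> v \<Longrightarrow> yields R (NT A) v"
| yields_Cat: "yields R a x \<Longrightarrow> yields R b y \<Longrightarrow> yields R (Cat a b) (tup_cat x y)"
| yields_Intc: "yields R a x \<Longrightarrow> yields R b y \<Longrightarrow> yields R (Intc j a b) (tup_intc j x y)"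

inductive_simps yields_Tup_iff[simp]: "yields R (Tup u) v"
inductive_simps yields_NT_iff: "yields R (NT A) v"
inductive_simps yields_Cat_iff[simp]: "yields R (Cat a b) v"
inductive_simps yields_Intc_iff[simp]: "yields R (Intc j a b) v"

fun tm_sem :: "('n \<Rightarrow> 'a tuple set) \<Rightarrow> ('a, 'n) tm \<Rightarrow> 'a tuple set" where
  "tm_sem S (Tup u) = {u}"
| "tm_sem S (NT A) = S A"
| "tm_sem S (Cat a b) = {tup_cat x y | x y. x \<in> tm_sem S a \<and> y \<in> tm_sem S b}"
| "tm_sem S (Intc j a b) = {tup_intc j x y | x y. x \<in> tm_sem S a \<and> y \<in> tm_sem S b}"

definition lang :: "('n \<times> ('a, 'n) tm) set \<Rightarrow> 'n \<Rightarrow> 'a tuple set" where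
  "lang R A = {v. yields R (NT A) v}"

lemma yields_iff_tm_sem: "yields R \<alpha> v \<longleftrightarrow> v \<in> tm_sem (lang R) \<alpha>"
  by (induction \<alpha> arbitrary: v) (auto simp: lang_def)

lemma tm_sem_rule_subset: "(A, \<beta>) \<in> R \<Longrightarrow> tm_sem (lang R) \<beta> \<subseteq> lang R A"
  by (auto simp: lang_def yields_iff_tm_sem[symmetric] intro: yields_NT)

lemma lang_least:
  assumes "\<And>X \<beta>. (X, \<beta>) \<in> R \<Longrightarrow> tm_sem S \<beta> \<subseteq> S X"
  shows "lang R X \<subseteq> S X"
proof -
  have "yields R \<alpha> v \<Longrightarrow> v \<in> tm_sem S \<alpha>" for \<alpha> v
    by (induction rule: yields.induct) (use assms in auto)
  then show ?thesis unfolding lang_def by force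
qed

lemma rtranclp_map:
  assumes "\<And>a a'. r a a' \<Longrightarrow> r (f a) (f a')" and "r\<^sup>*\<^sup>* a a'"
  shows "r\<^sup>*\<^sup>* (f a) (f a')"
  using assms(2) by induction (auto intro: rtranclp.rtrancl_into_rtrancl assms(1))

lemma rsteps_Cat:
  "(rstep R)\<^sup>*\<^sup>* a a' \<Longrightarrow> (rstep R)\<^sup>*\<^sup>* b b' \<Longrightarrow> (rstep R)\<^sup>*\<^sup>* (Cat a b) (Cat a' b')"
  using rtranclp_map[of "rstep R" "\<lambda>a. Cat a b"] rtranclp_map[of "rstep R" "Cat a'"]
  by (meson rstep.catL rstep.catR rtranclp_trans)

lemma rsteps_Intc:
  "(rstep R)\<^sup>*\<^sup>* a a' \<Longrightarrow> (rstep R)\<^sup>*\<^sup>* b b' \<Longrightarrow> (rstep R)\<^sup>*\<^sup>* (Intc j a b) (Intc j a' b')"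
  using rtranclp_map[of "rstep R" "\<lambda>a. Intc j a b"] rtranclp_map[of "rstep R" "Intc j a'"]
  by (meson rstep.intcL rstep.intcR rtranclp_trans)

lemma yields_iff_rsteps: "yields R \<alpha> v \<longleftrightarrow> (\<exists>\<beta>. (rstep R)\<^sup>*\<^sup>* \<alpha> \<beta> \<and> ground \<beta> \<and> val \<beta> = v)"
proof
  show "yields R \<alpha> v \<Longrightarrow> \<exists>\<beta>. (rstep R)\<^sup>*\<^sup>* \<alpha> \<beta> \<and> ground \<beta> \<and> val \<beta> = v"
  proof (induction rule: yields.induct)
    case (yields_Tup u)
    then show ?case by (auto simp: ground_def)
  next
    case (yields_NT A \<beta> v)
    then show ?case by (blast intro: converse_rtranclp_into_rtranclp rstep.rule)
  next
    case (yields_Cat a x b y)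
    then obtain a' b' where "(rstep R)\<^sup>*\<^sup>* a a'" "ground a'" "val a' = x"
      "(rstep R)\<^sup>*\<^sup>* b b'" "ground b'" "val b' = y" by blast
    then show ?case by (intro exI[of _ "Cat a' b'"]) (simp add: rsteps_Cat ground_def)
  next
    case (yields_Intc a x b y j)
    then obtain a' b' where "(rstep R)\<^sup>*\<^sup>* a a'" "ground a'" "val a' = x"
      "(rstep R)\<^sup>*\<^sup>* b b'" "ground b'" "val b' = y" by blast
    then show ?case by (intro exI[of _ "Intc j a' b'"]) (simp add: rsteps_Intc ground_def)
  qed
next
  have ground_yields: "ground \<beta> \<Longrightarrow> yields R \<beta> (val \<beta>)" for \<beta>
    by (induction \<beta>) (auto simp: ground_def intro: yields.intros)
  have step_yields: "rstep R \<alpha> \<alpha>' \<Longrightarrow> yields R \<alpha>' v \<Longrightarrow> yields R \<alpha> v" for \<alpha> \<alpha>' v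
    by (induction arbitrary: v rule: rstep.induct) (auto intro: yields.intros)
  show "\<exists>\<beta>. (rstep R)\<^sup>*\<^sup>* \<alpha> \<beta> \<and> ground \<beta> \<and> val \<beta> = v \<Longrightarrow> yields R \<alpha> v"
  proof (elim exE conjE)
    fix \<beta> assume "(rstep R)\<^sup>*\<^sup>* \<alpha> \<beta>" "ground \<beta>" "val \<beta> = v"
    then show "yields R \<alpha> v"
      by (induction rule: converse_rtranclp_induct) (auto intro: ground_yields step_yields)
  qed
qed

lemma LangNT_eq_lang: "LangNT G A = lang (Rules G) A"
  unfolding LangNT_def lang_def derives_def yields_iff_rsteps by blast

section \<open>Renaming nonterminals\<close>

fun rename_tm :: "('m \<Rightarrow> 'p) \<Rightarrow> ('a, 'm) tm \<Rightarrow> ('a, 'p) tm" where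
  "rename_tm f (Tup u) = Tup u"
| "rename_tm f (NT A) = NT (f A)"
| "rename_tm f (Cat a b) = Cat (rename_tm f a) (rename_tm f b)"
| "rename_tm f (Intc j a b) = Intc j (rename_tm f a) (rename_tm f b)"

definition rename_rules :: "('m \<Rightarrow> 'p) \<Rightarrow> ('m \<times> ('a, 'm) tm) set \<Rightarrow> ('p \<times> ('a, 'p) tm) set" where
  "rename_rules f R = (\<lambda>(X, \<alpha>). (f X, rename_tm f \<alpha>)) ` R"

lemma nts_rename_tm: "nts (rename_tm f \<alpha>) = map f (nts \<alpha>)"
  by (induction \<alpha>) auto

lemma leaf_tuples_rename_tm: "leaf_tuples (rename_tm f \<alpha>) = leaf_tuples \<alpha>"
  by (induction \<alpha>) auto

lemma tm_rank_rename_tm: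
  "(\<And>X. X \<in> set (nts \<alpha>) \<Longrightarrow> ra (f X) = rb X) \<Longrightarrow> tm_rank ra (rename_tm f \<alpha>) = tm_rank rb \<alpha>"
  by (induction \<alpha>) auto

lemma kcorrect_rename_tm:
  "(\<And>X. X \<in> set (nts \<alpha>) \<Longrightarrow> ra (f X) = rb X) \<Longrightarrow> kcorrect k ra (rename_tm f \<alpha>) = kcorrect k rb \<alpha>"
  by (induction \<alpha>) (auto simp: tm_rank_rename_tm)

lemma yields_rename: "yields R \<alpha> v \<Longrightarrow> yields (rename_rules f R) (rename_tm f \<alpha>) v"
proof (induction rule: yields.induct)
  case (yields_NT A \<beta> v)
  then have "(f A, rename_tm f \<beta>) \<in> rename_rules f R" unfolding rename_rules_def by force
  then show ?case using yields_NT by (auto intro: yields.yields_NT)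
qed (auto intro: yields.intros)

lemma yields_rename_back:
  assumes inj: "inj_on f N" and RN: "\<And>X \<alpha>. (X, \<alpha>) \<in> R \<Longrightarrow> X \<in> N \<and> set (nts \<alpha>) \<subseteq> N"
  shows "yields (rename_rules f R) \<beta> v \<Longrightarrow> \<beta> = rename_tm f \<alpha> \<Longrightarrow> set (nts \<alpha>) \<subseteq> N \<Longrightarrow> yields R \<alpha> v"
proof (induction arbitrary: \<alpha> rule: yields.induct)
  case (yields_Tup u)
  then show ?case by (cases \<alpha>) auto
next
  case (yields_NT A \<beta> v)
  then obtain X where X: "\<alpha> = NT X" "A = f X" "X \<in> N" by (cases \<alpha>) auto
  from yields_NT(1) obtain X' \<alpha>' where r: "(X', \<alpha>') \<in> R" "A = f X'" "\<beta> = rename_tm f \<alpha>'"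
    unfolding rename_rules_def by auto
  with RN have "X' = X" "yields R \<alpha>' v"
    using inj X yields_NT.IH by (auto dest: inj_onD)
  then show ?case using r X by (auto intro: yields.yields_NT)
next
  case (yields_Cat a x b y)
  then show ?case by (cases \<alpha>) auto
next
  case (yields_Intc a x b y j)
  then show ?case by (cases \<alpha>) auto
qed

lemma nf_rule_rename:
  assumes "nf_rule G (X, \<beta>)" "Start G' = f (Start G)"
  shows "nf_rule G' (f X, rename_tm f \<beta>)"
  using assms unfolding nf_rule_def by auto

definition rename_dcfg :: "('m \<Rightarrow> 'p) \<Rightarrow> ('a, 'm) dcfg \<Rightarrow> ('a, 'p) dcfg" where
  "rename_dcfg f G = \<lparr>NTs = f ` NTs G, rk = \<lambda>n. rk G (inv_into (NTs G) f n),
     Rules = rename_rules f (Rules G), Start = f (Start G)\<rparr>"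

lemma kDCFG_rename_dcfg:
  assumes inj: "inj_on f (NTs G)" and G: "is_kDCFG k G"
  shows "is_kDCFG k (rename_dcfg f G)"
proof -
  define G' where "G' = rename_dcfg f G"
  have rk: "rk G' (f X) = rk G X" if "X \<in> NTs G" for X
    using that inj by (simp add: G'_def rename_dcfg_def)
  have rule: "A \<in> NTs G' \<and> set (nts \<alpha>) \<subseteq> NTs G' \<and> kcorrect k (rk G') \<alpha> \<and>
      tm_rank (rk G') \<alpha> = rk G' A \<and> (\<forall>u\<in>set (leaf_tuples \<alpha>). tup_len u \<le> 1)"
    if rule_G': "(A, \<alpha>) \<in> Rules G'" for A \<alpha>
  proof -
    obtain X \<beta> where r: "(X, \<beta>) \<in> Rules G" "A = f X" "\<alpha> = rename_tm f \<beta>"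
      using rule_G' by (auto simp: G'_def rename_dcfg_def rename_rules_def)
    with G have X: "X \<in> NTs G" "set (nts \<beta>) \<subseteq> NTs G" "kcorrect k (rk G) \<beta>"
      "tm_rank (rk G) \<beta> = rk G X" "\<forall>u\<in>set (leaf_tuples \<beta>). tup_len u \<le> 1"
      unfolding is_kDCFG_def by blast+
    then have "\<And>Y. Y \<in> set (nts \<beta>) \<Longrightarrow> rk G' (f Y) = rk G Y"
      using rk by blast
    then show ?thesis
      using r X rk[of X] kcorrect_rename_tm[of \<beta> "rk G'" f "rk G"]
        tm_rank_rename_tm[of \<beta> "rk G'" f "rk G"]
      by (auto simp: G'_def nts_rename_tm leaf_tuples_rename_tm rename_dcfg_def)
  qed
  have "finite (NTs G')" "Start G' \<in> NTs G'" "rk G' (Start G') = 0" "finite (Rules G')"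
    using G rk unfolding is_kDCFG_def by (auto simp: G'_def rename_dcfg_def rename_rules_def)
  with rule have "is_kDCFG k G'"
    unfolding is_kDCFG_def by blast
  then show ?thesis by (simp add: G'_def)
qed

lemma Lang_rename_dcfg:
  assumes inj: "inj_on f (NTs G)" and G: "is_kDCFG k G"
  shows "Lang (rename_dcfg f G) = Lang G"
proof -
  have RN: "\<And>X \<alpha>. (X, \<alpha>) \<in> Rules G \<Longrightarrow> X \<in> NTs G \<and> set (nts \<alpha>) \<subseteq> NTs G"
    using G unfolding is_kDCFG_def by blast
  have "Start G \<in> NTs G"
    using G unfolding is_kDCFG_def by blast
  then have "yields (rename_rules f (Rules G)) (NT (f (Start G))) v \<longleftrightarrow>
      yields (Rules G) (NT (Start G)) v" for v
    using yields_rename_back[OF inj RN _ refl, where \<alpha> = "NT (Start G)"]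
      yields_rename[of "Rules G" "NT (Start G)" v f]
    by auto
  then show ?thesis
    by (simp add: Lang_def LangNT_eq_lang lang_def rename_dcfg_def)
qed

lemma normal_form_nat_nonterminals:
  fixes G :: "('a, 'm) dcfg"
  assumes G: "is_kDCFG k G" and nf: "\<forall>r \<in> Rules G. nf_rule G r"
  shows "\<exists>G' :: ('a, nat) dcfg. is_kDCFG k G' \<and> (\<forall>r \<in> Rules G'. nf_rule G' r) \<and> Lang G' = Lang G"
proof -
  have "finite (NTs G)" using G unfolding is_kDCFG_def by blast
  then obtain f :: "'m \<Rightarrow> nat" where inj: "inj_on f (NTs G)"
    using finite_imp_inj_to_nat_seg by blast
  have "nf_rule (rename_dcfg f G) r" if r: "r \<in> Rules (rename_dcfg f G)" for r
  proof -
    obtain X \<beta> where "(X, \<beta>) \<in> Rules G" "r = (f X, rename_tm f \<beta>)"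
      using r by (auto simp: rename_dcfg_def rename_rules_def)
    then show ?thesis
      using nf nf_rule_rename[of G X \<beta> "rename_dcfg f G" f] by (simp add: rename_dcfg_def)
  qed
  with kDCFG_rename_dcfg[OF inj G] Lang_rename_dcfg[OF inj G] show ?thesis by blast
qed

lemma tup_cat_not_Nil: "tup_cat x y \<noteq> []"
  by (simp add: tup_cat_def)

lemma length_tup_cat: "x \<noteq> [] \<Longrightarrow> y \<noteq> [] \<Longrightarrow> length (tup_cat x y) = length x + length y - 1"
  by (cases y) (auto simp: tup_cat_def)

lemma tup_len_append: "tup_len (xs @ ys) = tup_len xs + tup_len ys"
  by (simp add: tup_len_def)

lemma tup_len_tup_cat: "x \<noteq> [] \<Longrightarrow> y \<noteq> [] \<Longrightarrow> tup_len (tup_cat x y) = tup_len x + tup_len y"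
  by (cases y rule: list.exhaust, simp, cases x rule: rev_exhaust)
    (auto simp: tup_cat_def tup_len_def)

lemma length_tup_intc:
  assumes "1 \<le> j" "j < length x" "y \<noteq> []"
  shows "length (tup_intc j x y) = length x + length y - 2"
proof -
  have "take j x \<noteq> []" "drop j x \<noteq> []" using assms by auto
  with assms show ?thesis by (simp add: tup_intc_def length_tup_cat tup_cat_not_Nil)
qed

lemma tup_len_tup_intc:
  assumes "1 \<le> j" "j < length x" "y \<noteq> []"
  shows "tup_len (tup_intc j x y) = tup_len x + tup_len y"
proof -
  have "take j x \<noteq> []" "drop j x \<noteq> []" using assms by auto
  moreover have "tup_len x = tup_len (take j x) + tup_len (drop j x)"
    by (metis append_take_drop_id tup_len_append)
  ultimately show ?thesis
    using assms by (simp add: tup_intc_def tup_len_tup_cat tup_cat_not_Nil)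
qed

lemma tup_len_eq_0_replicate: "tup_len x = 0 \<Longrightarrow> x = replicate (length x) []"
  by (simp add: tup_len_def sum_list_eq_0_iff replicate_length_same)

lemma tup_intc_at:
  assumes "length P = g - 1" "1 \<le> g" "u \<noteq> []"
  shows "tup_intc g (P @ p # q # Q) u = P @ tup_cat (tup_cat [p] u) [q] @ Q"
  using assms
  by (cases u) (auto simp: tup_intc_def tup_cat_def take_Cons' drop_Cons' butlast_append)

section \<open>Elementary operations\<close>

text \<open>The operations performed by the normal-form rules of forms (1) and (2).\<close>

datatype 'a eop = Prep "'a tuple" | App "'a tuple" | Ins nat "'a tuple"

fun eop_apply :: "'a eop \<Rightarrow> 'a tuple \<Rightarrow> 'a tuple" where
  "eop_apply (Prep u) w = tup_cat u w"
| "eop_apply (App u) w = tup_cat w u"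
| "eop_apply (Ins j u) w = tup_intc j w u"

fun eop_rank :: "'a eop \<Rightarrow> nat \<Rightarrow> nat" where
  "eop_rank (Prep u) r = r + tup_rank u"
| "eop_rank (App u) r = r + tup_rank u"
| "eop_rank (Ins j u) r = r + tup_rank u - 1"

fun eop_ok :: "nat \<Rightarrow> nat \<Rightarrow> 'a eop \<Rightarrow> bool" where
  "eop_ok k r (Prep u) \<longleftrightarrow> u \<noteq> [] \<and> u \<noteq> eps_tup \<and> tup_len u \<le> 1 \<and> tup_rank u + r \<le> k"
| "eop_ok k r (App u) \<longleftrightarrow> u \<noteq> [] \<and> u \<noteq> eps_tup \<and> tup_len u \<le> 1 \<and> tup_rank u + r \<le> k"
| "eop_ok k r (Ins j u) \<longleftrightarrow> u \<noteq> [] \<and> tup_len u \<le> 1 \<and> 1 \<le> j \<and> j \<le> r \<and> r + tup_rank u \<le> k + 1"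

fun eops_ok :: "nat \<Rightarrow> nat \<Rightarrow> 'a eop list \<Rightarrow> bool" where
  "eops_ok k r [] \<longleftrightarrow> r \<le> k"
| "eops_ok k r (e # os) \<longleftrightarrow> r \<le> k \<and> eop_ok k r e \<and> eops_ok k (eop_rank e r) os"

lemma eops_ok_le: "eops_ok k r os \<Longrightarrow> r \<le> k"
  by (cases os) auto

lemma eops_ok_append: "eops_ok k r (xs @ ys) \<longleftrightarrow> eops_ok k r xs \<and> eops_ok k (fold eop_rank xs r) ys"
  by (induction xs arbitrary: r) (auto dest: eops_ok_le)

lemma eops_ok_rank_invariant:
  assumes "r \<le> k" "\<And>e. e \<in> set os \<Longrightarrow> eop_ok k r e \<and> eop_rank e r = r"
  shows "eops_ok k r os \<and> fold eop_rank os r = r"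
  using assms by (induction os) auto

lemma fold_eop_apply_butlast:
  "os \<noteq> [] \<Longrightarrow> fold eop_apply os w = eop_apply (last os) (fold eop_apply (butlast os) w)"
  by (cases os rule: rev_cases) auto

lemma eops_apply_length_tup_len:
  "eops_ok k r os \<Longrightarrow> length w = r + 1 \<Longrightarrow>
   length (fold eop_apply os w) = fold eop_rank os r + 1 \<and>
   tup_len w \<le> tup_len (fold eop_apply os w)"
proof (induction os arbitrary: r w)
  case (Cons e os)
  then have "w \<noteq> []" by auto
  have step: "length (eop_apply e w) = eop_rank e r + 1 \<and> tup_len w \<le> tup_len (eop_apply e w)"
  proof (cases e)
    case (Ins j u)
    with Cons.prems have "length u \<ge> 1" "j < length w" by (cases u; auto)+
    with Ins Cons.prems show ?thesis by (auto simp: length_tup_intc tup_len_tup_intc tup_rank_def)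
  qed (use Cons.prems \<open>w \<noteq> []\<close> in \<open>auto simp: length_tup_cat tup_len_tup_cat tup_rank_def\<close>)
  moreover have "eops_ok k (eop_rank e r) os" using Cons.prems by simp
  ultimately have
    "length (fold eop_apply os (eop_apply e w)) = fold eop_rank os (eop_rank e r) + 1 \<and>
      tup_len (eop_apply e w) \<le> tup_len (fold eop_apply os (eop_apply e w))"
    using Cons.IH by blast
  with step show ?case by simp
qed simp

text \<open>Appending, prepending or intercalating a fixed tuple is a sequence of elementary operations,
  each adding a single letter or a single separator.\<close>

fun append_eops :: "'a tuple \<Rightarrow> 'a eop list" where
  "append_eops [] = []"
| "append_eops [x] = map (\<lambda>a. App [[a]]) x"
| "append_eops (x # y # ys) = map (\<lambda>a. App [[a]]) x @ App [[], []] # append_eops (y # ys)"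

fun prepend_eops :: "'a tuple \<Rightarrow> 'a eop list" where
  "prepend_eops [] = []"
| "prepend_eops [x] = map (\<lambda>a. Prep [[a]]) (rev x)"
| "prepend_eops (x # y # ys) = prepend_eops (y # ys) @ Prep [[], []] # map (\<lambda>a. Prep [[a]]) (rev x)"

fun intc_eops :: "nat \<Rightarrow> 'a tuple \<Rightarrow> 'a eop list" where
  "intc_eops g [] = []"
| "intc_eops g [x] = map (\<lambda>a. Ins g [[a], []]) x @ [Ins g [[]]]"
| "intc_eops g [x, y] = map (\<lambda>a. Ins g [[a], []]) x @ map (\<lambda>b. Ins g [[], [b]]) (rev y)"
| "intc_eops g (x # y # z # zs) =
     map (\<lambda>a. Ins g [[a], []]) x @ Ins g [[], [], []] # intc_eops (Suc g) (y # z # zs)"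

lemma fold_append_letters:
  "w \<noteq> [] \<Longrightarrow> fold eop_apply (map (\<lambda>a. App [[a]]) s) w = butlast w @ [last w @ s]"
proof (induction s arbitrary: w)
  case (Cons a s)
  have "eop_apply (App [[a]]) w = butlast w @ [last w @ [a]]" by (simp add: tup_cat_def)
  then show ?case using Cons.IH[of "butlast w @ [last w @ [a]]"] by simp
qed simp

lemma fold_prepend_letters:
  "w \<noteq> [] \<Longrightarrow> fold eop_apply (map (\<lambda>a. Prep [[a]]) (rev s)) w = (s @ hd w) # tl w"
  by (induction s) (simp_all add: tup_cat_def)

lemma fold_intc_letters_left:
  assumes "length P = g - 1" "1 \<le> g"
  shows "fold eop_apply (map (\<lambda>a. Ins g [[a], []]) s) (P @ p # q # Q) = P @ (p @ s) # q # Q"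
proof (induction s arbitrary: p)
  case (Cons a s)
  have "eop_apply (Ins g [[a], []]) (P @ p # q # Q) = P @ (p @ [a]) # q # Q"
    using assms by (simp add: tup_intc_at tup_cat_def)
  then show ?case using Cons.IH[of "p @ [a]"] by simp
qed simp

lemma fold_intc_letters_right:
  assumes "length P = g - 1" "1 \<le> g"
  shows "fold eop_apply (map (\<lambda>b. Ins g [[], [b]]) (rev s)) (P @ p # q # Q) = P @ p # (s @ q) # Q"
proof (induction s arbitrary: q)
  case (Cons a s)
  have "eop_apply (Ins g [[], [a]]) (P @ p # (s @ q) # Q) = P @ p # (a # s @ q) # Q"
    using assms by (simp add: tup_intc_at tup_cat_def)
  then show ?case using Cons.IH by simp
qed simp

lemma append_eops_correct: "w \<noteq> [] \<Longrightarrow> x \<noteq> [] \<Longrightarrow> fold eop_apply (append_eops x) w = tup_cat w x"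
proof (induction x arbitrary: w rule: append_eops.induct)
  case (3 x y ys)
  define w' where "w' = butlast w @ [last w @ x]"
  have "fold eop_apply (append_eops (x # y # ys)) w =
      fold eop_apply (append_eops (y # ys)) (w' @ [[]])"
    using 3 by (simp add: fold_append_letters w'_def tup_cat_def)
  also have "\<dots> = tup_cat (w' @ [[]]) (y # ys)" using 3 by simp
  also have "\<dots> = tup_cat w (x # y # ys)" by (simp add: tup_cat_def w'_def butlast_append)
  finally show ?case .
qed (auto simp: fold_append_letters tup_cat_def)

lemma prepend_eops_correct: "w \<noteq> [] \<Longrightarrow> x \<noteq> [] \<Longrightarrow> fold eop_apply (prepend_eops x) w = tup_cat x w"
proof (induction x arbitrary: w rule: prepend_eops.induct)
  case (3 x y ys)
  have "eop_apply (Prep [[], []]) (tup_cat (y # ys) w) = [] # tup_cat (y # ys) w"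
    by (simp add: tup_cat_def)
  with 3 show ?case by (simp add: fold_prepend_letters tup_cat_not_Nil) (simp add: tup_cat_def)
qed (auto simp: fold_prepend_letters tup_cat_def)

lemma intc_eops_correct_at:
  "length P = g - 1 \<Longrightarrow> 1 \<le> g \<Longrightarrow> x \<noteq> [] \<Longrightarrow>
   fold eop_apply (intc_eops g x) (P @ p # q # Q) = tup_intc g (P @ p # q # Q) x"
proof (induction g x arbitrary: P p q rule: intc_eops.induct)
  case (4 g x y z zs)
  have "fold eop_apply (intc_eops g (x # y # z # zs)) (P @ p # q # Q)
      = fold eop_apply (intc_eops (Suc g) (y # z # zs)) ((P @ [p @ x]) @ [] # q # Q)"
    using 4 by (simp add: fold_intc_letters_left tup_intc_at tup_cat_def)
  also have "\<dots> = (P @ [p @ x]) @ tup_cat (tup_cat [[]] (y # z # zs)) [q] @ Q"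
    using 4 "4.IH"[of "P @ [p @ x]" "[]" q] tup_intc_at[of "P @ [p @ x]" "Suc g" "y # z # zs"]
    by simp
  also have "\<dots> = tup_intc g (P @ p # q # Q) (x # y # z # zs)"
    using 4 by (simp add: tup_intc_at tup_cat_def)
  finally show ?case .
qed (auto simp: fold_intc_letters_left fold_intc_letters_right tup_intc_at tup_cat_def)

lemma intc_eops_correct:
  assumes "1 \<le> g" "g < length w" "x \<noteq> []"
  shows "fold eop_apply (intc_eops g x) w = tup_intc g w x"
proof -
  have "drop (g - 1) w = w ! (g - 1) # w ! g # drop (Suc g) w"
    using assms Cons_nth_drop_Suc[of "g - 1" w] Cons_nth_drop_Suc[of g w] by simp
  then have "w = take (g - 1) w @ w ! (g - 1) # w ! g # drop (Suc g) w"
    using append_take_drop_id[of "g - 1" w] by simp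
  moreover have "length (take (g - 1) w) = g - 1"
    using assms by simp
  ultimately show ?thesis
    using intc_eops_correct_at[of "take (g - 1) w" g x] assms by metis
qed

lemma append_eops_ok:
  "x \<noteq> [] \<Longrightarrow> r + tup_rank x \<le> k \<Longrightarrow>
   eops_ok k r (append_eops x) \<and> fold eop_rank (append_eops x) r = r + tup_rank x"
proof (induction x arbitrary: r rule: append_eops.induct)
  case (2 x)
  then show ?case
    by (simp add: tup_rank_def, intro eops_ok_rank_invariant)
      (auto simp: tup_rank_def tup_len_def eps_tup_def)
next
  case (3 x y ys)
  have "eops_ok k r (map (\<lambda>a. App [[a]]) x) \<and> fold eop_rank (map (\<lambda>a. App [[a]]) x) r = r"
    using 3 by (intro eops_ok_rank_invariant) (auto simp: tup_rank_def tup_len_def eps_tup_def)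
  moreover have "eops_ok k (Suc r) (append_eops (y # ys)) \<and>
      fold eop_rank (append_eops (y # ys)) (Suc r) = Suc r + tup_rank (y # ys)"
    using 3 by (intro "3.IH") (auto simp: tup_rank_def)
  ultimately show ?case
    using 3 by (auto simp: eops_ok_append tup_rank_def tup_len_def eps_tup_def)
qed simp

lemma prepend_eops_ok:
  "x \<noteq> [] \<Longrightarrow> r + tup_rank x \<le> k \<Longrightarrow>
   eops_ok k r (prepend_eops x) \<and> fold eop_rank (prepend_eops x) r = r + tup_rank x"
proof (induction x arbitrary: r rule: prepend_eops.induct)
  case (2 x)
  then show ?case
    by (simp add: tup_rank_def, intro eops_ok_rank_invariant)
      (auto simp: tup_rank_def tup_len_def eps_tup_def)
next
  case (3 x y ys)
  have "eops_ok k r (prepend_eops (y # ys)) \<and>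
      fold eop_rank (prepend_eops (y # ys)) r = r + tup_rank (y # ys)"
    using 3 by (intro "3.IH") (auto simp: tup_rank_def)
  moreover have "eops_ok k (Suc (r + length ys)) (map (\<lambda>a. Prep [[a]]) (rev x)) \<and>
      fold eop_rank (map (\<lambda>a. Prep [[a]]) (rev x)) (Suc (r + length ys)) = Suc (r + length ys)"
    using 3 by (intro eops_ok_rank_invariant) (auto simp: tup_rank_def tup_len_def eps_tup_def)
  ultimately show ?case
    using 3 by (auto simp: eops_ok_append tup_rank_def tup_len_def eps_tup_def)
qed simp

lemma intc_eops_ok:
  "x \<noteq> [] \<Longrightarrow> 1 \<le> g \<Longrightarrow> g \<le> r \<Longrightarrow> r \<le> k \<Longrightarrow> r + tup_rank x \<le> k + 1 \<Longrightarrow>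
   eops_ok k r (intc_eops g x) \<and> fold eop_rank (intc_eops g x) r = r + tup_rank x - 1"
proof (induction g x arbitrary: r rule: intc_eops.induct)
  case (2 g x)
  have "eops_ok k r (map (\<lambda>a. Ins g [[a], []]) x) \<and>
      fold eop_rank (map (\<lambda>a. Ins g [[a], []]) x) r = r"
    using 2 by (intro eops_ok_rank_invariant) (auto simp: tup_rank_def tup_len_def)
  with 2 show ?case by (auto simp: eops_ok_append tup_rank_def tup_len_def)
next
  case (3 g x y)
  have "eops_ok k r (map (\<lambda>a. Ins g [[a], []]) x) \<and>
      fold eop_rank (map (\<lambda>a. Ins g [[a], []]) x) r = r"
    "eops_ok k r (map (\<lambda>b. Ins g [[], [b]]) (rev y)) \<and>
      fold eop_rank (map (\<lambda>b. Ins g [[], [b]]) (rev y)) r = r"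
    using 3 by (intro eops_ok_rank_invariant; auto simp: tup_rank_def tup_len_def)+
  then show ?case by (simp add: eops_ok_append tup_rank_def)
next
  case (4 g x y z zs)
  have "eops_ok k r (map (\<lambda>a. Ins g [[a], []]) x) \<and>
      fold eop_rank (map (\<lambda>a. Ins g [[a], []]) x) r = r"
    using 4 by (intro eops_ok_rank_invariant) (auto simp: tup_rank_def tup_len_def)
  moreover have "eops_ok k (Suc r) (intc_eops (Suc g) (y # z # zs)) \<and>
      fold eop_rank (intc_eops (Suc g) (y # z # zs)) (Suc r) = Suc r + tup_rank (y # z # zs) - 1"
    using 4 by (intro "4.IH") (auto simp: tup_rank_def)
  ultimately show ?case
    using 4 by (auto simp: eops_ok_append tup_rank_def tup_len_def)
qed simp

text \<open>A tuple of positive length is built from one of its letters by elementary operations.\<close>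

fun letter_decomp :: "'a tuple \<Rightarrow> 'a \<times> 'a eop list" where
  "letter_decomp [] = (undefined, [])"
| "letter_decomp (x # xs) = (if x \<noteq> [] then (hd x, append_eops (tl x # xs))
     else (fst (letter_decomp xs), snd (letter_decomp xs) @ [Prep [[], []]]))"

lemma letter_decomp_correct:
  "tup_len v \<noteq> 0 \<Longrightarrow> length v \<le> k + 1 \<Longrightarrow>
   fold eop_apply (snd (letter_decomp v)) [[fst (letter_decomp v)]] = v \<and>
   eops_ok k 0 (snd (letter_decomp v)) \<and> fold eop_rank (snd (letter_decomp v)) 0 = length v - 1"
proof (induction v)
  case (Cons x xs)
  show ?case
  proof (cases "x = []")
    case False
    have "fold eop_apply (append_eops (tl x # xs)) [[hd x]] = tup_cat [[hd x]] (tl x # xs)"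
      by (simp add: append_eops_correct)
    also have "\<dots> = x # xs"
      using False by (simp add: tup_cat_def)
    finally show ?thesis
      using False Cons.prems append_eops_ok[of "tl x # xs" 0 k] by (simp add: tup_rank_def)
  next
    case True
    with Cons.prems have xs: "tup_len xs \<noteq> 0" "length xs \<le> k + 1"
      by (auto simp: tup_len_def)
    then have "xs \<noteq> []" by (auto simp: tup_len_def)
    then have "eop_apply (Prep [[], []]) xs = [] # xs"
      by (cases xs) (auto simp: tup_cat_def)
    with True Cons.IH[OF xs] \<open>xs \<noteq> []\<close> Cons.prems show ?thesis
      by (auto simp: eops_ok_append tup_rank_def tup_len_def eps_tup_def)
  qed
qed (simp add: tup_len_def)

fun plug :: "('a, 'n) tm \<Rightarrow> 'a tuple \<Rightarrow> ('a, 'n) tm" where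
  "plug (Tup u) w = Tup u"
| "plug (NT A) w = Tup w"
| "plug (Cat a b) w = Cat (plug a w) (plug b w)"
| "plug (Intc j a b) w = Intc j (plug a w) (plug b w)"

lemma plug_ground: "nts \<alpha> = [] \<Longrightarrow> plug \<alpha> w = \<alpha>"
  by (induction \<alpha>) auto

lemma nts_Cat_single:
  "nts (Cat a b) = [B] \<Longrightarrow> (nts a = [B] \<and> nts b = []) \<or> (nts a = [] \<and> nts b = [B])"
  by (cases "nts a") auto

lemma nts_Intc_single:
  "nts (Intc j a b) = [B] \<Longrightarrow> (nts a = [B] \<and> nts b = []) \<or> (nts a = [] \<and> nts b = [B])"
  by (cases "nts a") auto

lemma tm_sem_ground: "nts \<alpha> = [] \<Longrightarrow> tm_sem S \<alpha> = {val \<alpha>}"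
  by (induction \<alpha>) auto

lemma tm_sem_linear: "nts \<alpha> = [B] \<Longrightarrow> tm_sem S \<alpha> = (\<lambda>w. val (plug \<alpha> w)) ` S B"
proof (induction \<alpha>)
  case (Cat a b)
  from nts_Cat_single[OF Cat.prems] show ?case
    by (elim disjE conjE) (use Cat.IH in \<open>auto simp: tm_sem_ground plug_ground\<close>)
next
  case (Intc j a b)
  from nts_Intc_single[OF Intc.prems] show ?case
    by (elim disjE conjE) (use Intc.IH in \<open>auto simp: tm_sem_ground plug_ground\<close>)
qed auto

lemma kcorrect_tm_rank: "kcorrect k rkf \<alpha> \<Longrightarrow> tm_rank rkf \<alpha> \<le> k"
  by (cases \<alpha>) (auto simp: tup_rank_def)

lemma length_val_plug:
  "kcorrect k rkf \<alpha> \<Longrightarrow> (\<And>B. B \<in> set (nts \<alpha>) \<Longrightarrow> length w = rkf B + 1) \<Longrightarrow>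
   length (val (plug \<alpha> w)) = tm_rank rkf \<alpha> + 1"
proof (induction \<alpha>)
  case (Cat a b)
  then have "length (val (plug a w)) = tm_rank rkf a + 1"
    "length (val (plug b w)) = tm_rank rkf b + 1"
    by auto
  then show ?case by (simp add: length_tup_cat flip: length_greater_0_conv)
next
  case (Intc j a b)
  then have "length (val (plug a w)) = tm_rank rkf a + 1"
    "length (val (plug b w)) = tm_rank rkf b + 1"
    "1 \<le> j" "j \<le> tm_rank rkf a"
    by auto
  then show ?case by (simp add: length_tup_intc flip: length_greater_0_conv)
qed (auto simp: tup_rank_def)

lemma length_val_plug_linear:
  "kcorrect k rkf \<alpha> \<Longrightarrow> set (nts \<alpha>) \<subseteq> {B} \<Longrightarrow> length w = rkf B + 1 \<Longrightarrow>
   length (val (plug \<alpha> w)) = tm_rank rkf \<alpha> + 1"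
  by (rule length_val_plug) auto

lemma length_val_ground: "kcorrect k rkf \<alpha> \<Longrightarrow> nts \<alpha> = [] \<Longrightarrow> length (val \<alpha>) = tm_rank rkf \<alpha> + 1"
  using length_val_plug[of k rkf \<alpha> "[]"] by (simp add: plug_ground)

fun lin_eops :: "('a, 'n) tm \<Rightarrow> 'a eop list" where
  "lin_eops (Tup u) = []"
| "lin_eops (NT A) = []"
| "lin_eops (Cat a b) =
     (if nts a \<noteq> [] then lin_eops a @ append_eops (val b) else lin_eops b @ prepend_eops (val a))"
| "lin_eops (Intc j a b) = (if nts a \<noteq> [] then lin_eops a @ intc_eops j (val b)
     else lin_eops b @ prepend_eops (take j (val a)) @ append_eops (drop j (val a)))"

lemma lin_eops_apply:
  "kcorrect k rkf \<alpha> \<Longrightarrow> nts \<alpha> = [B] \<Longrightarrow> length w = rkf B + 1 \<Longrightarrow>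
   fold eop_apply (lin_eops \<alpha>) w = val (plug \<alpha> w)"
proof (induction \<alpha>)
  case (Cat a b)
  have k: "kcorrect k rkf a" "kcorrect k rkf b"
    using Cat.prems(1) by simp_all
  have sub: "set (nts a) \<subseteq> {B}" "set (nts b) \<subseteq> {B}"
    using arg_cong[where f = set, OF Cat.prems(2)]
    by (simp_all only: nts.simps set_append list.set) blast+
  note len = length_val_plug_linear[OF k(1) sub(1) Cat.prems(3)]
    length_val_plug_linear[OF k(2) sub(2) Cat.prems(3)]
  from nts_Cat_single[OF Cat.prems(2)] show ?case
  proof (elim disjE conjE)
    assume "nts a = [B]" "nts b = []"
    moreover from this len have "val b \<noteq> []" "val (plug a w) \<noteq> []"
      by (auto simp: plug_ground)
    ultimately show ?case
      using Cat.IH(1)[OF k(1) _ Cat.prems(3)] by (simp add: plug_ground append_eops_correct)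
  next
    assume "nts a = []" "nts b = [B]"
    moreover from this len have "val a \<noteq> []" "val (plug b w) \<noteq> []"
      by (auto simp: plug_ground)
    ultimately show ?case
      using Cat.IH(2)[OF k(2) _ Cat.prems(3)] by (simp add: plug_ground prepend_eops_correct)
  qed
next
  case (Intc j a b)
  have k: "kcorrect k rkf a" "kcorrect k rkf b"
    using Intc.prems(1) by simp_all
  have sub: "set (nts a) \<subseteq> {B}" "set (nts b) \<subseteq> {B}"
    using arg_cong[where f = set, OF Intc.prems(2)]
    by (simp_all only: nts.simps set_append list.set) blast+
  note len = length_val_plug_linear[OF k(1) sub(1) Intc.prems(3)]
    length_val_plug_linear[OF k(2) sub(2) Intc.prems(3)]
  show ?case
  proof (cases "nts a")
    case Nil
    with Intc.prems len have "take j (val a) \<noteq> []" "drop j (val a) \<noteq> []" "val (plug b w) \<noteq> []"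
      by (auto simp: plug_ground)
    with Nil Intc show ?thesis
      by (auto dest!: nts_Intc_single simp: plug_ground prepend_eops_correct append_eops_correct
          tup_cat_not_Nil tup_intc_def)
  next
    case (Cons B' l)
    with Intc.prems len have "nts a = [B]" "nts b = []" "val b \<noteq> []" "j < length (val (plug a w))"
      by (auto simp: plug_ground)
    with Intc show ?thesis by (simp add: intc_eops_correct plug_ground)
  qed
qed auto

lemma lin_eops_ok:
  "kcorrect k rkf \<alpha> \<Longrightarrow> nts \<alpha> = [B] \<Longrightarrow>
   eops_ok k (rkf B) (lin_eops \<alpha>) \<and> fold eop_rank (lin_eops \<alpha>) (rkf B) = tm_rank rkf \<alpha>"
proof (induction \<alpha>)
  case (Cat a b)
  have k: "kcorrect k rkf a" "kcorrect k rkf b" "tm_rank rkf a + tm_rank rkf b \<le> k"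
    using Cat.prems(1) by simp_all
  from nts_Cat_single[OF Cat.prems(2)] show ?case
  proof (elim disjE conjE)
    assume nts: "nts a = [B]" "nts b = []"
    have "length (val b) = tm_rank rkf b + 1"
      using length_val_ground[OF k(2) nts(2)] .
    then have "eops_ok k (tm_rank rkf a) (append_eops (val b)) \<and>
        fold eop_rank (append_eops (val b)) (tm_rank rkf a) = tm_rank rkf a + tm_rank rkf b"
      using k(3) append_eops_ok[of "val b" "tm_rank rkf a" k]
      by (auto simp: tup_rank_def simp flip: length_greater_0_conv)
    with nts Cat.IH(1)[OF k(1) nts(1)] show ?case by (simp add: eops_ok_append)
  next
    assume nts: "nts a = []" "nts b = [B]"
    have "length (val a) = tm_rank rkf a + 1"
      using length_val_ground[OF k(1) nts(1)] .
    then have "eops_ok k (tm_rank rkf b) (prepend_eops (val a)) \<and>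
        fold eop_rank (prepend_eops (val a)) (tm_rank rkf b) = tm_rank rkf b + tm_rank rkf a"
      using k(3) prepend_eops_ok[of "val a" "tm_rank rkf b" k]
      by (auto simp: tup_rank_def simp flip: length_greater_0_conv)
    with nts Cat.IH(2)[OF k(2) nts(2)] show ?case by (simp add: eops_ok_append)
  qed
next
  case (Intc j a b)
  have k: "kcorrect k rkf a" "kcorrect k rkf b" "tm_rank rkf a + tm_rank rkf b \<le> k + 1"
      "1 \<le> j" "j \<le> tm_rank rkf a"
    using Intc.prems(1) by simp_all
  from nts_Intc_single[OF Intc.prems(2)] show ?case
  proof (elim disjE conjE)
    assume nts: "nts a = [B]" "nts b = []"
    have "length (val b) = tm_rank rkf b + 1"
      using length_val_ground[OF k(2) nts(2)] .
    then have "eops_ok k (tm_rank rkf a) (intc_eops j (val b)) \<and>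
        fold eop_rank (intc_eops j (val b)) (tm_rank rkf a) = tm_rank rkf a + tm_rank rkf b - 1"
      using k kcorrect_tm_rank[OF k(1)] intc_eops_ok[of "val b" j "tm_rank rkf a" k]
      by (auto simp: tup_rank_def simp flip: length_greater_0_conv)
    with nts Intc.IH(1)[OF k(1) nts(1)] show ?case by (simp add: eops_ok_append)
  next
    assume nts: "nts a = []" "nts b = [B]"
    have len: "length (take j (val a)) = j" "length (drop j (val a)) = tm_rank rkf a + 1 - j"
      using length_val_ground[OF k(1) nts(1)] k by auto
    have "eops_ok k (tm_rank rkf b) (prepend_eops (take j (val a))) \<and>
        fold eop_rank (prepend_eops (take j (val a))) (tm_rank rkf b) = tm_rank rkf b + (j - 1)"
      using len k prepend_eops_ok[of "take j (val a)" "tm_rank rkf b" k]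
      by (auto simp: tup_rank_def simp flip: length_greater_0_conv)
    moreover have "eops_ok k (tm_rank rkf b + (j - 1)) (append_eops (drop j (val a))) \<and>
        fold eop_rank (append_eops (drop j (val a))) (tm_rank rkf b + (j - 1))
          = tm_rank rkf a + tm_rank rkf b - 1"
      using len k append_eops_ok[of "drop j (val a)" "tm_rank rkf b + (j - 1)" k]
      by (auto simp: tup_rank_def simp flip: length_greater_0_conv)
    ultimately show ?case
      using nts Intc.IH(2)[OF k(2) nts(2)] by (simp add: eops_ok_append)
  qed
qed auto

datatype ('a, 'n) base = Nonterm 'n | Letter 'a

text \<open>Nonterminals of the normal-form grammar: Top A generates the tuples of positive length
  generated by A, Chain b os the results of the operations os applied to the tuples of the
  base b, and Init is the new start symbol.\<close>

datatype ('a, 'n) nf_nt = Top 'n | Chain "('a, 'n) base" "'a eop list" | Init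

fun chain_ok :: "('a, 'n) base \<Rightarrow> 'a eop list \<Rightarrow> bool" where
  "chain_ok (Nonterm B) os \<longleftrightarrow> os \<noteq> []"
| "chain_ok (Letter a) os \<longleftrightarrow> True"

fun chain_nt :: "('a, 'n) base \<Rightarrow> 'a eop list \<Rightarrow> ('a, 'n) nf_nt" where
  "chain_nt (Nonterm B) os = (if os = [] then Top B else Chain (Nonterm B) os)"
| "chain_nt (Letter a) os = Chain (Letter a) os"

fun base_rank :: "('n \<Rightarrow> nat) \<Rightarrow> ('a, 'n) base \<Rightarrow> nat" where
  "base_rank rkf (Nonterm B) = rkf B"
| "base_rank rkf (Letter a) = 0"

fun eop_tm :: "'a eop \<Rightarrow> ('a, 'm) tm \<Rightarrow> ('a, 'm) tm" where
  "eop_tm (Prep u) t = Cat (Tup u) t"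
| "eop_tm (App u) t = Cat t (Tup u)"
| "eop_tm (Ins j u) t = Intc j t (Tup u)"

definition chain_rhs :: "('a, 'n) base \<Rightarrow> 'a eop list \<Rightarrow> ('a, ('a, 'n) nf_nt) tm" where
  "chain_rhs b os = (if os = [] then (case b of Letter a \<Rightarrow> Tup [[a]] | Nonterm B \<Rightarrow> NT (Top B))
     else eop_tm (last os) (NT (chain_nt b (butlast os))))"

lemma eop_tm_wf:
  assumes "eop_ok k r e" "r \<le> k" "rkf Y = r"
  shows "kcorrect k rkf (eop_tm e (NT Y)) \<and> tm_rank rkf (eop_tm e (NT Y)) = eop_rank e r \<and>
    (\<forall>u\<in>set (leaf_tuples (eop_tm e (NT Y))). tup_len u \<le> 1) \<and> nts (eop_tm e (NT Y)) = [Y] \<and>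
    nf_rule G' (X, eop_tm e (NT Y))"
  using assms by (cases e) (auto simp: nf_rule_def tup_rank_def)

lemma chain_nt_cases:
  "(chain_nt b os = Chain b os \<and> chain_ok b os) \<or>
   (\<exists>B. b = Nonterm B \<and> os = [] \<and> chain_nt b os = Top B)"
  by (cases b) auto

lemma tm_sem_eop_tm: "tm_sem S (eop_tm e t) = eop_apply e ` tm_sem S t"
  by (cases e) auto

lemma tm_sem_chain_rhs:
  "os \<noteq> [] \<Longrightarrow> tm_sem S (chain_rhs b os) = eop_apply (last os) ` S (chain_nt b (butlast os))"
  by (simp add: chain_rhs_def tm_sem_eop_tm)

definition letter_chain :: "'a tuple \<Rightarrow> ('a, 'n) base \<times> 'a eop list" where
  "letter_chain v = (Letter (fst (letter_decomp v)), snd (letter_decomp v))"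

lemma letter_chain_correct:
  assumes "tup_len v \<noteq> 0" "length v \<le> k + 1" "letter_chain v = (b, os)"
  shows "\<exists>a. b = Letter a \<and> fold eop_apply os [[a]] = v"
    and "eops_ok k 0 os" "fold eop_rank os 0 = length v - 1"
  using letter_decomp_correct[OF assms(1,2)] assms(3) by (auto simp: letter_chain_def)

section \<open>The normal-form grammar of a linear grammar\<close>

locale linear_kDCFG =
  fixes k :: nat and G :: "('a, 'n) dcfg"
  assumes kDCFG: "is_kDCFG k G" and linear: "linear_dcfg G"
begin

lemma rule_wf:
  "(A, \<alpha>) \<in> Rules G \<Longrightarrow>
   A \<in> NTs G \<and> set (nts \<alpha>) \<subseteq> NTs G \<and> kcorrect k (rk G) \<alpha> \<and> tm_rank (rk G) \<alpha> = rk G A"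
  using kDCFG unfolding is_kDCFG_def by blast

lemma rule_linear: "(A, \<alpha>) \<in> Rules G \<Longrightarrow> nts \<alpha> = [] \<or> (\<exists>B. nts \<alpha> = [B])"
  using linear unfolding linear_dcfg_def linear_tm_def
  by (cases "nts \<alpha>") auto

lemma Start_in_NTs: "Start G \<in> NTs G" and rk_Start: "rk G (Start G) = 0"
  using kDCFG unfolding is_kDCFG_def by blast+

definition L :: "'n \<Rightarrow> 'a tuple set" where
  "L = lang (Rules G)"

definition Lpos :: "'n \<Rightarrow> 'a tuple set" where
  "Lpos A = {v \<in> L A. tup_len v \<noteq> 0}"

lemma length_yields: "yields (Rules G) \<alpha> v \<Longrightarrow> kcorrect k (rk G) \<alpha> \<Longrightarrow> length v = tm_rank (rk G) \<alpha> + 1"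
proof (induction rule: yields.induct)
  case (yields_NT A \<beta> v)
  then show ?case using rule_wf[OF yields_NT(1)] by simp
next
  case (yields_Cat a x b y)
  then show ?case by (simp add: length_tup_cat flip: length_greater_0_conv)
next
  case (yields_Intc a x b y j)
  then show ?case by (simp add: length_tup_intc flip: length_greater_0_conv)
qed (simp add: tup_rank_def)

lemma length_L:
  assumes "v \<in> L A"
  shows "length v = rk G A + 1"
proof -
  obtain \<beta> where "(A, \<beta>) \<in> Rules G" "yields (Rules G) \<beta> v"
    using assms by (auto simp: L_def lang_def yields_NT_iff)
  then show ?thesis using rule_wf length_yields by metis
qed

lemma rule_eops_ok:
  "(A, \<alpha>) \<in> Rules G \<Longrightarrow> nts \<alpha> = [B] \<Longrightarrow>
   eops_ok k (rk G B) (lin_eops \<alpha>) \<and> fold eop_rank (lin_eops \<alpha>) (rk G B) = rk G A"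
  using lin_eops_ok rule_wf by metis

lemma rule_eops_apply:
  assumes "(A, \<alpha>) \<in> Rules G" "nts \<alpha> = [B]" "w \<in> L B"
  shows "fold eop_apply (lin_eops \<alpha>) w = val (plug \<alpha> w)" "val (plug \<alpha> w) \<in> L A"
proof -
  show "fold eop_apply (lin_eops \<alpha>) w = val (plug \<alpha> w)"
    using assms lin_eops_apply rule_wf length_L by metis
  have "val (plug \<alpha> w) \<in> tm_sem L \<alpha>"
    using assms(2,3) by (simp add: tm_sem_linear)
  then show "val (plug \<alpha> w) \<in> L A"
    using tm_sem_rule_subset[OF assms(1)] by (auto simp: L_def)
qed

definition unit_rule :: "'n \<Rightarrow> 'n \<Rightarrow> bool" where
  "unit_rule A B \<longleftrightarrow> (\<exists>\<alpha>. (A, \<alpha>) \<in> Rules G \<and> nts \<alpha> = [B] \<and> lin_eops \<alpha> = [])"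

lemma unit_rules_L: "unit_rule\<^sup>*\<^sup>* A B \<Longrightarrow> L B \<subseteq> L A \<and> rk G A = rk G B"
proof (induction rule: rtranclp_induct)
  case (step B C)
  then obtain \<alpha> where "(B, \<alpha>) \<in> Rules G" "nts \<alpha> = [C]" "lin_eops \<alpha> = []"
    unfolding unit_rule_def by blast
  then have "L C \<subseteq> L B" "rk G B = rk G C"
    using rule_eops_apply rule_eops_ok by fastforce+
  with step.IH show ?case by auto
qed simp

text \<open>The value a rule contributes without using its nonterminal's contribution of positive length:
  the value of a ground rule, or the value on the tuple of empty words.\<close>

definition zero_input :: "('a, 'n) tm \<Rightarrow> 'a tuple" where
  "zero_input \<alpha> = replicate (rk G (hd (nts \<alpha>)) + 1) []"

definition const_val :: "('a, 'n) tm \<Rightarrow> 'a tuple" where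
  "const_val \<alpha> = val (plug \<alpha> (zero_input \<alpha>))"

definition has_const_val :: "('a, 'n) tm \<Rightarrow> bool" where
  "has_const_val \<alpha> \<longleftrightarrow> nts \<alpha> = [] \<or> zero_input \<alpha> \<in> L (hd (nts \<alpha>))"

lemma const_val_L:
  assumes "(A, \<alpha>) \<in> Rules G" "has_const_val \<alpha>"
  shows "const_val \<alpha> \<in> L A"
  using rule_linear[OF assms(1)]
proof (elim disjE exE)
  assume "nts \<alpha> = []"
  then have "const_val \<alpha> \<in> tm_sem L \<alpha>" by (simp add: const_val_def tm_sem_ground plug_ground)
  then show ?thesis using tm_sem_rule_subset[OF assms(1)] by (auto simp: L_def)
next
  fix B assume "nts \<alpha> = [B]"
  then show ?thesis
    using assms rule_eops_apply(2) unfolding const_val_def has_const_val_def by simp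
qed

lemma const_val_empty_input:
  assumes "(A, \<alpha>) \<in> Rules G" "nts \<alpha> = [B]" "x \<in> L B" "tup_len x = 0"
  shows "has_const_val \<alpha>" "const_val \<alpha> = val (plug \<alpha> x)"
proof -
  have "x = zero_input \<alpha>"
    using tup_len_eq_0_replicate[OF assms(4)] length_L[OF assms(3)] assms(2)
    by (simp add: zero_input_def)
  with assms(2,3) show "has_const_val \<alpha>" "const_val \<alpha> = val (plug \<alpha> x)"
    by (simp_all add: has_const_val_def const_val_def)
qed

lemma length_const_val:
  "(A, \<alpha>) \<in> Rules G \<Longrightarrow> has_const_val \<alpha> \<Longrightarrow> length (const_val \<alpha>) \<le> k + 1"
  using const_val_L length_L rule_wf kcorrect_tm_rank by fastforce

text \<open>The chains whose results make up Lpos A: those of the rules reached from A by unit rules.\<close>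

definition decomps :: "'n \<Rightarrow> (('a, 'n) base \<times> 'a eop list) set" where
  "decomps A =
     {(Nonterm B, lin_eops \<alpha>) | A' \<alpha> B.
        unit_rule\<^sup>*\<^sup>* A A' \<and> (A', \<alpha>) \<in> Rules G \<and> nts \<alpha> = [B] \<and> lin_eops \<alpha> \<noteq> []} \<union>
     {letter_chain (const_val \<alpha>) | A' \<alpha>.
        unit_rule\<^sup>*\<^sup>* A A' \<and> (A', \<alpha>) \<in> Rules G \<and> has_const_val \<alpha> \<and> tup_len (const_val \<alpha>) \<noteq> 0}"

definition chains :: "(('a, 'n) base \<times> 'a eop list) set" where
  "chains = {(b, take i os) | b os i A.
     A \<in> NTs G \<and> (b, os) \<in> decomps A \<and> i < length os \<and> chain_ok b (take i os)}"

definition nf_rules :: "(('a, 'n) nf_nt \<times> ('a, ('a, 'n) nf_nt) tm) set" where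
  "nf_rules =
     {(Top A, chain_rhs b os) | A b os. A \<in> NTs G \<and> (b, os) \<in> decomps A} \<union>
     {(Init, chain_rhs b os) | b os. (b, os) \<in> decomps (Start G)} \<union>
     (if eps_tup \<in> L (Start G) then {(Init, Tup eps_tup)} else {}) \<union>
     {(Chain b os, chain_rhs b os) | b os. (b, os) \<in> chains}"

definition nf_nts :: "('a, 'n) nf_nt set" where
  "nf_nts = Top ` NTs G \<union> {Init} \<union> (\<lambda>(b, os). Chain b os) ` chains"

fun nf_rk :: "('a, 'n) nf_nt \<Rightarrow> nat" where
  "nf_rk (Top A) = rk G A"
| "nf_rk (Chain b os) = fold eop_rank os (base_rank (rk G) b)"
| "nf_rk Init = 0"

definition nf_grammar :: "('a, ('a, 'n) nf_nt) dcfg" where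
  "nf_grammar = \<lparr>NTs = nf_nts, rk = nf_rk, Rules = nf_rules, Start = Init\<rparr>"

lemma letter_chain_const_val:
  assumes "(A, \<alpha>) \<in> Rules G" "has_const_val \<alpha>" "tup_len (const_val \<alpha>) \<noteq> 0"
    "letter_chain (const_val \<alpha>) = (b, os)"
  shows "\<exists>a. b = Letter a \<and> fold eop_apply os [[a]] = const_val \<alpha>"
    and "eops_ok k 0 os" "fold eop_rank os 0 = rk G A"
  using letter_chain_correct[OF assms(3) length_const_val[OF assms(1,2)] assms(4)]
    length_L[OF const_val_L[OF assms(1,2)]] by auto

definition base_lang :: "('a, 'n) base \<Rightarrow> 'a tuple set" where
  "base_lang b = (case b of Nonterm B \<Rightarrow> Lpos B | Letter a \<Rightarrow> {[[a]]})"

fun nf_sem :: "('a, 'n) nf_nt \<Rightarrow> 'a tuple set" where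
  "nf_sem (Top A) = Lpos A"
| "nf_sem (Chain b os) = fold eop_apply os ` base_lang b"
| "nf_sem Init = L (Start G)"

lemma tm_sem_nf_sem_chain_rhs: "tm_sem nf_sem (chain_rhs b os) = fold eop_apply os ` base_lang b"
proof (cases "os = []")
  case True
  then show ?thesis by (cases b) (auto simp: chain_rhs_def base_lang_def)
next
  case False
  have "nf_sem (chain_nt b os') = fold eop_apply os' ` base_lang b" for os'
    by (cases b) (auto simp: base_lang_def)
  with False show ?thesis
    by (simp add: tm_sem_chain_rhs image_image fold_eop_apply_butlast)
qed

lemma decomps_sound:
  assumes "(b, os) \<in> decomps A"
  shows "fold eop_apply os ` base_lang b \<subseteq> Lpos A"
  using assms unfolding decomps_def
proof (elim UnE CollectE exE conjE)
  fix A' \<alpha> B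
  assume "(b, os) = (Nonterm B, lin_eops \<alpha>)" and u: "unit_rule\<^sup>*\<^sup>* A A'"
    and r: "(A', \<alpha>) \<in> Rules G" "nts \<alpha> = [B]"
  then have b: "b = Nonterm B" "os = lin_eops \<alpha>" by auto
  show ?thesis
  proof (rule image_subsetI)
    fix x assume "x \<in> base_lang b"
    then have x: "x \<in> L B" "tup_len x \<noteq> 0" by (auto simp: b base_lang_def Lpos_def)
    have "tup_len x \<le> tup_len (fold eop_apply os x)"
      using eops_apply_length_tup_len rule_eops_ok[OF r] length_L[OF x(1)] b by blast
    moreover have "fold eop_apply os x \<in> L A"
      using rule_eops_apply[OF r x(1)] unit_rules_L[OF u] b by auto
    ultimately show "fold eop_apply os x \<in> Lpos A"
      using x(2) by (simp add: Lpos_def)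
  qed
next
  fix A' \<alpha>
  assume "(b, os) = letter_chain (const_val \<alpha>)" and u: "unit_rule\<^sup>*\<^sup>* A A'"
    and r: "(A', \<alpha>) \<in> Rules G" "has_const_val \<alpha>" "tup_len (const_val \<alpha>) \<noteq> 0"
  then obtain a where "b = Letter a" "fold eop_apply os [[a]] = const_val \<alpha>"
    using letter_chain_const_val(1)[OF r] by metis
  then have "fold eop_apply os ` base_lang b = {const_val \<alpha>}"
    by (simp add: base_lang_def)
  then show ?thesis
    using const_val_L[OF r(1,2)] unit_rules_L[OF u] r(3) by (auto simp: Lpos_def)
qed

lemma Lnf_sound: "lang nf_rules X \<subseteq> nf_sem X"
proof (rule lang_least)
  fix X \<beta> assume "(X, \<beta>) \<in> nf_rules"
  then consider (top) A b os where "X = Top A" "\<beta> = chain_rhs b os" "(b, os) \<in> decomps A"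
    | (init) b os where "X = Init" "\<beta> = chain_rhs b os" "(b, os) \<in> decomps (Start G)"
    | (eps) "X = Init" "\<beta> = Tup eps_tup" "eps_tup \<in> L (Start G)"
    | (chain) b os where "X = Chain b os" "\<beta> = chain_rhs b os"
    unfolding nf_rules_def by (auto split: if_splits)
  then show "tm_sem nf_sem \<beta> \<subseteq> nf_sem X"
  proof cases
    case top
    then show ?thesis using decomps_sound by (simp add: tm_sem_nf_sem_chain_rhs)
  next
    case init
    then show ?thesis using decomps_sound by (fastforce simp: tm_sem_nf_sem_chain_rhs Lpos_def)
  qed (simp_all add: tm_sem_nf_sem_chain_rhs)
qed

abbreviation Lnf :: "('a, 'n) nf_nt \<Rightarrow> 'a tuple set" where
  "Lnf \<equiv> lang nf_rules"

definition base_lang_nf :: "('a, 'n) base \<Rightarrow> 'a tuple set" where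
  "base_lang_nf b = (case b of Nonterm B \<Rightarrow> Lnf (Top B) | Letter a \<Rightarrow> {[[a]]})"

lemma decomps_chain_ok: "(b, os) \<in> decomps A \<Longrightarrow> chain_ok b os"
  unfolding decomps_def letter_chain_def by auto

lemma chains_butlast:
  assumes "(b, os) \<in> chains" "chain_ok b (butlast os)"
  shows "(b, butlast os) \<in> chains"
proof -
  obtain os' i A where "os = take i os'" "A \<in> NTs G" "(b, os') \<in> decomps A" "i < length os'"
    using assms(1) unfolding chains_def by blast
  then show ?thesis
    using assms(2) unfolding chains_def
    by (intro CollectI exI[of _ b] exI[of _ os'] exI[of _ "i - 1"] exI[of _ A])
      (simp add: butlast_take)
qed

lemma decomps_butlast:
  assumes "(b, os) \<in> decomps A" "A \<in> NTs G" "os \<noteq> []" "chain_ok b (butlast os)"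
  shows "(b, butlast os) \<in> chains"
  using assms unfolding chains_def
  by (intro CollectI exI[of _ b] exI[of _ os] exI[of _ "length os - 1"] exI[of _ A])
    (simp add: butlast_conv_take)

lemma chain_rhs_complete:
  assumes "(X, chain_rhs b os) \<in> nf_rules" "chain_ok b os"
    and "os \<noteq> [] \<Longrightarrow> chain_ok b (butlast os) \<Longrightarrow>
      fold eop_apply (butlast os) ` base_lang_nf b \<subseteq> Lnf (Chain b (butlast os))"
  shows "fold eop_apply os ` base_lang_nf b \<subseteq> Lnf X"
proof (cases "os = []")
  case True
  then obtain a where "b = Letter a" using assms(2) by (cases b) auto
  with True tm_sem_rule_subset[OF assms(1)] show ?thesis
    by (simp add: chain_rhs_def base_lang_nf_def)
next
  case False
  have "fold eop_apply (butlast os) ` base_lang_nf b \<subseteq> Lnf (chain_nt b (butlast os))"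
    using chain_nt_cases[of b "butlast os"]
  proof (elim disjE exE conjE)
    assume "chain_nt b (butlast os) = Chain b (butlast os)" "chain_ok b (butlast os)"
    then show ?thesis using assms(3) False by simp
  qed (simp add: base_lang_nf_def)
  moreover have "eop_apply (last os) ` Lnf (chain_nt b (butlast os)) \<subseteq> Lnf X"
    using tm_sem_rule_subset[OF assms(1)] False by (simp add: tm_sem_chain_rhs)
  ultimately show ?thesis
    using False by (auto simp: fold_eop_apply_butlast)
qed

lemma chains_chain_ok: "(b, os) \<in> chains \<Longrightarrow> chain_ok b os"
  unfolding chains_def by blast

lemma chain_rule_in_nf_rules: "(b, os) \<in> chains \<Longrightarrow> (Chain b os, chain_rhs b os) \<in> nf_rules"
  unfolding nf_rules_def by (intro UnI2) blast

lemma chain_complete: "(b, os) \<in> chains \<Longrightarrow> fold eop_apply os ` base_lang_nf b \<subseteq> Lnf (Chain b os)"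
proof (induction os rule: rev_induct)
  case Nil
  show ?case
    by (rule chain_rhs_complete) (use Nil chain_rule_in_nf_rules chains_chain_ok in auto)
next
  case (snoc e os)
  show ?case
  proof (rule chain_rhs_complete)
    show "(Chain b (os @ [e]), chain_rhs b (os @ [e])) \<in> nf_rules" "chain_ok b (os @ [e])"
      using snoc.prems by (rule chain_rule_in_nf_rules, rule chains_chain_ok)
    show "fold eop_apply (butlast (os @ [e])) ` base_lang_nf b \<subseteq> Lnf (Chain b (butlast (os @ [e])))"
      if "chain_ok b (butlast (os @ [e]))"
      using snoc.IH chains_butlast[OF snoc.prems that] by simp
  qed
qed

definition represents :: "('a, 'n) nf_nt \<Rightarrow> 'n \<Rightarrow> bool" where
  "represents X A \<longleftrightarrow> (X = Top A \<and> A \<in> NTs G) \<or> (X = Init \<and> A = Start G)"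

lemma decomp_complete:
  assumes "(b, os) \<in> decomps A" "represents X A"
  shows "fold eop_apply os ` base_lang_nf b \<subseteq> Lnf X"
proof (rule chain_rhs_complete)
  show "(X, chain_rhs b os) \<in> nf_rules"
    using assms unfolding nf_rules_def represents_def by blast
  have "A \<in> NTs G" using assms(2) Start_in_NTs by (auto simp: represents_def)
  then show "fold eop_apply (butlast os) ` base_lang_nf b \<subseteq> Lnf (Chain b (butlast os))"
    if "os \<noteq> []" "chain_ok b (butlast os)"
    using that assms(1) decomps_butlast chain_complete by blast
qed (rule decomps_chain_ok[OF assms(1)])

lemma const_val_complete:
  assumes "(A', \<beta>) \<in> Rules G" "unit_rule\<^sup>*\<^sup>* A A'" "has_const_val \<beta>" "tup_len (const_val \<beta>) \<noteq> 0"
    "represents X A"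
  shows "const_val \<beta> \<in> Lnf X"
proof -
  obtain b :: "('a, 'n) base" and os where bos: "letter_chain (const_val \<beta>) = (b, os)"
    by fastforce
  with assms have "(b, os) \<in> decomps A" unfolding decomps_def by auto
  moreover obtain a where "b = Letter a" "fold eop_apply os [[a]] = const_val \<beta>"
    using letter_chain_const_val(1)[OF assms(1,3,4) bos] by blast
  ultimately show ?thesis
    using decomp_complete[OF _ assms(5)] by (force simp: base_lang_nf_def)
qed

text \<open>The invariant of the completeness induction over the derivations of the given grammar.\<close>

definition complete_nt :: "'n \<Rightarrow> 'a tuple \<Rightarrow> bool" where
  "complete_nt A v \<longleftrightarrow>
     (tup_len v \<noteq> 0 \<longrightarrow> (\<forall>A0 X. unit_rule\<^sup>*\<^sup>* A0 A \<longrightarrow> represents X A0 \<longrightarrow> v \<in> Lnf X))"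

definition complete_tm :: "('a, 'n) tm \<Rightarrow> 'a tuple \<Rightarrow> bool" where
  "complete_tm \<alpha> v \<longleftrightarrow> (nts \<alpha> = [] \<longrightarrow> v = val \<alpha>) \<and>
     (\<forall>B. nts \<alpha> = [B] \<longrightarrow> (\<exists>w. w \<in> L B \<and> complete_nt B w \<and> v = val (plug \<alpha> w)))"

lemma complete_nt_linear_rule:
  assumes r: "(A, \<beta>) \<in> Rules G" "nts \<beta> = [B]" and x: "x \<in> L B" "complete_nt B x"
  shows "complete_nt A (val (plug \<beta> x))"
  unfolding complete_nt_def
proof (intro impI allI)
  fix A0 X
  assume len: "tup_len (val (plug \<beta> x)) \<noteq> 0" and u: "unit_rule\<^sup>*\<^sup>* A0 A" and X: "represents X A0"
  have v: "fold eop_apply (lin_eops \<beta>) x = val (plug \<beta> x)"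
    using rule_eops_apply(1)[OF r x(1)] .
  consider "lin_eops \<beta> = []" | "lin_eops \<beta> \<noteq> []" "tup_len x \<noteq> 0" | "tup_len x = 0" by blast
  then show "val (plug \<beta> x) \<in> Lnf X"
  proof cases
    case 1
    then have "unit_rule\<^sup>*\<^sup>* A0 B"
      using u r unit_rule_def by (meson rtranclp.rtrancl_into_rtrancl)
    with x(2) v 1 len X show ?thesis by (simp add: complete_nt_def)
  next
    case 2
    have "B \<in> NTs G" using rule_wf[OF r(1)] r(2) by simp
    then have "x \<in> Lnf (Top B)"
      using x(2) 2 unfolding complete_nt_def represents_def by blast
    moreover have "(Nonterm B, lin_eops \<beta>) \<in> decomps A0"
      using u r 2 unfolding decomps_def by blast
    ultimately show ?thesis
      using decomp_complete[OF _ X] v by (force simp: base_lang_nf_def)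
  next
    case 3
    with const_val_empty_input[OF r x(1)] const_val_complete[OF r(1) u _ _ X] len show ?thesis
      by simp
  qed
qed

lemma complete_nt_rule:
  assumes r: "(A, \<beta>) \<in> Rules G" and v: "complete_tm \<beta> v"
  shows "complete_nt A v"
  using rule_linear[OF r]
proof (elim disjE exE)
  assume "nts \<beta> = []"
  then have "v = const_val \<beta>" "has_const_val \<beta>"
    using v by (simp_all add: complete_tm_def const_val_def has_const_val_def plug_ground)
  then show ?thesis
    using const_val_complete[OF r] by (simp add: complete_nt_def)
next
  fix B assume "nts \<beta> = [B]"
  with v complete_nt_linear_rule[OF r] show ?thesis by (auto simp: complete_tm_def)
qed

lemma yields_complete: "yields (Rules G) \<alpha> v \<Longrightarrow> complete_tm \<alpha> v"
proof (induction rule: yields.induct)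
  case (yields_NT A \<beta> v)
  then have "complete_nt A v" using complete_nt_rule by blast
  moreover have "v \<in> L A"
    using yields_NT by (auto simp: L_def lang_def intro: yields.yields_NT)
  ultimately show ?case by (auto simp: complete_tm_def)
next
  case (yields_Cat a x b y)
  show ?case
    unfolding complete_tm_def
  proof (intro conjI allI impI)
    show "nts (Cat a b) = [] \<Longrightarrow> tup_cat x y = val (Cat a b)"
      using yields_Cat.IH by (simp add: complete_tm_def)
    fix B assume "nts (Cat a b) = [B]"
    from nts_Cat_single[OF this]
    show "\<exists>w. w \<in> L B \<and> complete_nt B w \<and> tup_cat x y = val (plug (Cat a b) w)"
      using yields_Cat.IH by (elim disjE) (auto simp: complete_tm_def plug_ground)
  qed
next
  case (yields_Intc a x b y j)
  show ?case
    unfolding complete_tm_def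
  proof (intro conjI allI impI)
    show "nts (Intc j a b) = [] \<Longrightarrow> tup_intc j x y = val (Intc j a b)"
      using yields_Intc.IH by (simp add: complete_tm_def)
    fix B assume "nts (Intc j a b) = [B]"
    from nts_Intc_single[OF this]
    show "\<exists>w. w \<in> L B \<and> complete_nt B w \<and> tup_intc j x y = val (plug (Intc j a b) w)"
      using yields_Intc.IH by (elim disjE) (auto simp: complete_tm_def plug_ground)
  qed
qed (simp add: complete_tm_def)

lemma Lnf_Init: "Lnf Init = L (Start G)"
proof
  show "Lnf Init \<subseteq> L (Start G)" using Lnf_sound[of Init] by simp
  show "L (Start G) \<subseteq> Lnf Init"
  proof
    fix v assume v: "v \<in> L (Start G)"
    show "v \<in> Lnf Init"
    proof (cases "tup_len v = 0")
      case False
      have "complete_tm (NT (Start G)) v"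
        using v by (intro yields_complete) (simp add: L_def lang_def)
      then show ?thesis
        using False Start_in_NTs unfolding complete_tm_def complete_nt_def represents_def by auto
    next
      case True
      then have "v = eps_tup"
        using tup_len_eq_0_replicate[of v] length_L[OF v] rk_Start by (simp add: eps_tup_def)
      then have "(Init, Tup v) \<in> nf_rules" using v unfolding nf_rules_def by simp
      from tm_sem_rule_subset[OF this] show ?thesis by simp
    qed
  qed
qed

lemma decomps_wf:
  assumes "(b, os) \<in> decomps A"
  shows "eops_ok k (base_rank (rk G) b) os \<and> fold eop_rank os (base_rank (rk G) b) = rk G A \<and>
    (\<forall>B. b = Nonterm B \<longrightarrow> B \<in> NTs G)"
  using assms unfolding decomps_def
proof (elim UnE CollectE exE conjE)
  fix A' \<alpha> B
  assume b: "(b, os) = (Nonterm B, lin_eops \<alpha>)" and u: "unit_rule\<^sup>*\<^sup>* A A'"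
    and r: "(A', \<alpha>) \<in> Rules G" "nts \<alpha> = [B]"
  have "rk G A = rk G A'" using unit_rules_L[OF u] by simp
  moreover have "B \<in> NTs G" using rule_wf[OF r(1)] r(2) by simp
  ultimately show ?thesis using rule_eops_ok[OF r] b by simp
next
  fix A' \<alpha>
  assume b: "(b, os) = letter_chain (const_val \<alpha>)" and u: "unit_rule\<^sup>*\<^sup>* A A'"
    and r: "(A', \<alpha>) \<in> Rules G" "has_const_val \<alpha>" "tup_len (const_val \<alpha>) \<noteq> 0"
  have "rk G A = rk G A'" using unit_rules_L[OF u] by simp
  with letter_chain_const_val[OF r b[symmetric]] show ?thesis by auto
qed

lemma chains_wf:
  assumes "(b, os) \<in> chains"
  shows "chain_ok b os \<and> eops_ok k (base_rank (rk G) b) os \<and> (\<forall>B. b = Nonterm B \<longrightarrow> B \<in> NTs G)"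
proof -
  obtain os' i A where h: "os = take i os'" "(b, os') \<in> decomps A" "chain_ok b os"
    using assms unfolding chains_def by blast
  then have "eops_ok k (base_rank (rk G) b) (take i os' @ drop i os')"
    using decomps_wf by simp
  then show ?thesis using h decomps_wf eops_ok_append by blast
qed

lemma finite_decomps: "finite (decomps A)"
proof -
  have "finite (Rules G)" using kDCFG unfolding is_kDCFG_def by blast
  moreover have "decomps A \<subseteq> (\<lambda>(A', \<alpha>). (Nonterm (hd (nts \<alpha>)), lin_eops \<alpha>)) ` Rules G \<union>
      (\<lambda>(A', \<alpha>). letter_chain (const_val \<alpha>)) ` Rules G"
    unfolding decomps_def by force
  ultimately show ?thesis by (meson finite_Un finite_imageI finite_subset)
qed

lemma finite_chains: "finite chains"
proof (rule finite_subset)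
  show "chains \<subseteq> (\<Union>A\<in>NTs G. \<Union>p\<in>decomps A. (\<lambda>i. (fst p, take i (snd p))) ` {..<length (snd p)})"
  proof
    fix x assume "x \<in> chains"
    then obtain b os i A
      where "x = (b, take i os)" "A \<in> NTs G" "(b, os) \<in> decomps A" "i < length os"
      unfolding chains_def by blast
    then show "x \<in> (\<Union>A\<in>NTs G. \<Union>p\<in>decomps A. (\<lambda>i. (fst p, take i (snd p))) ` {..<length (snd p)})"
      by (intro UN_I[of A] UN_I[of "(b, os)"]) auto
  qed
  show "finite \<dots>"
    using kDCFG finite_decomps unfolding is_kDCFG_def by blast
qed

lemma chain_rhs_wf:
  assumes "chain_ok b os" "eops_ok k (base_rank (rk G) b) os" "\<forall>B. b = Nonterm B \<longrightarrow> B \<in> NTs G"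
    "os \<noteq> [] \<Longrightarrow> chain_ok b (butlast os) \<Longrightarrow> (b, butlast os) \<in> chains"
  shows "set (nts (chain_rhs b os)) \<subseteq> nf_nts \<and> kcorrect k nf_rk (chain_rhs b os) \<and>
    tm_rank nf_rk (chain_rhs b os) = fold eop_rank os (base_rank (rk G) b) \<and>
    (\<forall>u\<in>set (leaf_tuples (chain_rhs b os)). tup_len u \<le> 1) \<and> nf_rule G' (X, chain_rhs b os)"
proof (cases "os = []")
  case True
  then obtain a where "b = Letter a" using assms(1) by (cases b) auto
  with True show ?thesis by (simp add: chain_rhs_def nf_rule_def tup_rank_def tup_len_def)
next
  case False
  define Y where "Y = chain_nt b (butlast os)"
  have os: "os = butlast os @ [last os]" using False by simp
  then have "eops_ok k (fold eop_rank (butlast os) (base_rank (rk G) b)) [last os]"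
    using assms(2) eops_ok_append by metis
  then have ok: "eop_ok k (fold eop_rank (butlast os) (base_rank (rk G) b)) (last os)"
    "fold eop_rank (butlast os) (base_rank (rk G) b) \<le> k"
    by auto
  have rk: "nf_rk Y = fold eop_rank (butlast os) (base_rank (rk G) b)"
    by (cases b) (simp_all add: Y_def)
  have "Y \<in> nf_nts"
    using chain_nt_cases[of b "butlast os"] assms(3,4) False unfolding Y_def nf_nts_def by force
  moreover have "chain_rhs b os = eop_tm (last os) (NT Y)"
    using False by (simp add: chain_rhs_def Y_def)
  moreover have "fold eop_rank os (base_rank (rk G) b) =
      eop_rank (last os) (fold eop_rank (butlast os) (base_rank (rk G) b))"
    by (subst os) simp
  ultimately show ?thesis
    using eop_tm_wf[where rkf = nf_rk and Y = Y and G' = G' and X = X, OF ok rk] by simp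
qed

lemma nf_rules_wf:
  assumes "(X, \<beta>) \<in> nf_rules"
  shows "X \<in> nf_nts \<and> set (nts \<beta>) \<subseteq> nf_nts \<and> kcorrect k nf_rk \<beta> \<and> tm_rank nf_rk \<beta> = nf_rk X \<and>
    (\<forall>u\<in>set (leaf_tuples \<beta>). tup_len u \<le> 1) \<and> nf_rule nf_grammar (X, \<beta>)"
proof -
  from assms consider
      (top) A b os where "X = Top A" "\<beta> = chain_rhs b os" "A \<in> NTs G" "(b, os) \<in> decomps A"
    | (init) b os where "X = Init" "\<beta> = chain_rhs b os" "(b, os) \<in> decomps (Start G)"
    | (eps) "X = Init" "\<beta> = Tup eps_tup"
    | (chain) b os where "X = Chain b os" "\<beta> = chain_rhs b os" "(b, os) \<in> chains"
    unfolding nf_rules_def by (auto split: if_splits)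
  then show ?thesis
  proof cases
    case top
    then show ?thesis
      using chain_rhs_wf[OF decomps_chain_ok _ _ decomps_butlast] decomps_wf
      by (simp add: nf_nts_def)
  next
    case init
    then show ?thesis
      using chain_rhs_wf[OF decomps_chain_ok _ _ decomps_butlast] decomps_wf Start_in_NTs rk_Start
      by (simp add: nf_nts_def)
  next
    case eps
    then show ?thesis
      by (simp add: nf_nts_def nf_rule_def nf_grammar_def eps_tup_def tup_rank_def tup_len_def)
  next
    case chain
    then show ?thesis
      using chain_rhs_wf[OF _ _ _ chains_butlast] chains_wf by (force simp: nf_nts_def)
  qed
qed

lemma finite_nf_rules: "finite nf_rules"
proof (rule finite_subset)
  show "nf_rules \<subseteq> (\<Union>A\<in>NTs G. (\<lambda>(b, os). (Top A, chain_rhs b os)) ` decomps A) \<union>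
      (\<lambda>(b, os). (Init, chain_rhs b os)) ` decomps (Start G) \<union> {(Init, Tup eps_tup)} \<union>
      (\<lambda>(b, os). (Chain b os, chain_rhs b os)) ` chains"
    unfolding nf_rules_def by auto
  show "finite \<dots>"
    using kDCFG finite_decomps finite_chains unfolding is_kDCFG_def by blast
qed

lemma nf_grammar_kDCFG: "is_kDCFG k nf_grammar"
proof -
  have "finite nf_nts" "Init \<in> nf_nts"
    using kDCFG finite_chains unfolding is_kDCFG_def nf_nts_def by blast+
  then show ?thesis
    using nf_rules_wf finite_nf_rules unfolding is_kDCFG_def by (simp add: nf_grammar_def) fast
qed

lemma nf_grammar_normal: "\<forall>r \<in> Rules nf_grammar. nf_rule nf_grammar r"
  using nf_rules_wf by (auto simp: nf_grammar_def)

lemma Lang_nf_grammar: "Lang nf_grammar = Lang G"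
  using Lnf_Init by (simp add: Lang_def LangNT_eq_lang nf_grammar_def L_def)

end

theorem lemma2:
  fixes k :: nat and G :: "('a::finite, 'n) dcfg"
  assumes "is_kDCFG k G" and "linear_dcfg G"
  shows "\<exists>G' :: ('a, nat) dcfg. is_kDCFG k G' \<and> (\<forall>r \<in> Rules G'. nf_rule G' r) \<and>
           Lang G' = Lang G"
proof -
  interpret linear_kDCFG k G using assms by unfold_locales
  show ?thesis
    using normal_form_nat_nonterminals[OF nf_grammar_kDCFG nf_grammar_normal] Lang_nf_grammar
    by simp
qed

end
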